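(* Let $A, B, C, D \in \mathrm{SL}(2,\mathbb{R})$ and for integers $k, \ell$ let $M_{k,\ell} = D^\ell C B^k A$. Suppose $\mathrm{Tr}(B) = \mathrm{Tr}(D)$ and that for some integer $n \ge 0$, $$\mathrm{Tr}(M_{0,0}) = \mathrm{Tr}(B^n), \quad \mathrm{Tr}(M_{1,1}) = \mathrm{Tr}(B^{n+2}), \quad \mathrm{Tr}(M_{2,2}) = \mathrm{Tr}(B^{n+4}).$$ Then for all integers $k \ge 3$, $\mathrm{Tr}(M_{k,k}) = \mathrm{Tr}(B^{n+2k})$. *)

theory Defs
  imports "HOL-Analysis.Analysis"
begin

primrec matpow :: "'a::semiring_1^'n^'n \<Rightarrow> nat \<Rightarrow> 'a^'n^'n" where
  "matpow A 0 = mat 1"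
| "matpow A (Suc k) = A ** matpow A k"

definition SL2 :: "(real^2^2) set" where
  "SL2 = {A. det A = 1}"

definition Mkl :: "real^2^2 \<Rightarrow> real^2^2 \<Rightarrow> real^2^2 \<Rightarrow> real^2^2 \<Rightarrow> nat \<Rightarrow> nat \<Rightarrow> real^2^2" where
  "Mkl A B C D k l = matpow D l ** C ** matpow B k ** A"

end

theory Submission imports Defs begin

text \<open>Let \<open>t = trace B = trace D\<close> and \<open>T Y = D ** Y ** B\<close>. The eigenvalues of \<open>T\<close>
  are the products of those of \<open>D\<close> and \<open>B\<close>, i.e. \<open>\<lambda>\<^sup>2, 1, 1, 1/\<lambda>\<^sup>2\<close> with
  \<open>\<lambda> + 1/\<lambda> = t\<close>, so \<open>T\<close> is annihilated by
  \<open>(x - 1) (x\<^sup>2 - (t\<^sup>2 - 2) x + 1) = x\<^sup>3 - (t\<^sup>2 - 1) x\<^sup>2 + (t\<^sup>2 - 1) x - 1\<close>.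
  Now \<open>M(k,k) = T\<^sup>k(C) ** A\<close>, while \<open>B\<^sup>n\<^sup>+\<^sup>2\<^sup>k = T\<^sup>k(B\<^sup>n)\<close> is the case \<open>D = B, C = B\<^sup>n, A = 1\<close>;
  so both trace sequences obey the same third-order linear recurrence and agree at \<open>k = 0, 1, 2\<close>.\<close>

lemma matpow_Suc_right: "matpow (A::'a::semiring_1^'n^'n) (Suc k) = matpow A k ** A"
  by (induction k) (simp_all add: matrix_mul_assoc)

lemma matpow_add: "matpow (A::'a::semiring_1^'n^'n) (m + k) = matpow A m ** matpow A k"
  by (induction m) (simp_all add: matrix_mul_assoc)

lemma funpow_sandwich:
  fixes B C D :: "'a::semiring_1^'n^'n"
  shows "((\<lambda>Y. D ** Y ** B) ^^ k) C = matpow D k ** C ** matpow B k"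
proof (induction k)
  case (Suc k)
  have "matpow D (Suc k) ** C ** matpow B (Suc k) = D ** (matpow D k ** C ** matpow B k) ** B"
    unfolding matpow.simps(2)[of D] matpow_Suc_right[of B] by (simp only: matrix_mul_assoc)
  with Suc show ?case by simp
qed simp

lemma Mkl_diag_funpow: "Mkl A B C D k k = ((\<lambda>Y. D ** Y ** B) ^^ k) C ** A"
  by (simp add: Mkl_def funpow_sandwich)

lemma matrix_add_rdistrib:
  fixes A B :: "'a::semiring_1^'n^'m"
  shows "(A + B) ** C = A ** C + B ** C"
  by (vector matrix_matrix_mult_def sum.distrib[symmetric] distrib_right)

lemma matrix_diff_rdistrib:
  fixes A B :: "'a::ring_1^'n^'m"
  shows "(A - B) ** C = A ** C - B ** C"
  by (vector matrix_matrix_mult_def sum_subtractf[symmetric] left_diff_distrib)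

lemma trace_scaleR: "trace (a *\<^sub>R (A::real^'n^'n)) = a * trace A"
  by (simp add: trace_def sum_distrib_left)

lemma sandwich_cubic:
  fixes B D Y :: "real^2^2"
  assumes "det B = 1" and "det D = 1" and "trace D = trace B"
  defines "T \<equiv> \<lambda>Y. D ** Y ** B" and "s \<equiv> (trace B)\<^sup>2 - 1"
  shows "T (T (T Y)) = s *\<^sub>R T (T Y) - s *\<^sub>R T Y + Y"
proof -
  have "B$1$1 * B$2$2 - B$1$2 * B$2$1 = 1" "D$1$1 * D$2$2 - D$1$2 * D$2$1 = 1"
    using assms(1,2) by (simp_all add: det_2)
  moreover have "D$2$2 = B$1$1 + B$2$2 - D$1$1"
    using assms(3) by (simp add: trace_def sum_2)
  ultimately show ?thesis
    unfolding T_def s_def vec_eq_iff forall_2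
    by (simp add: matrix_matrix_mult_def sum_2 trace_def; algebra)
qed

lemma trace_Mkl_diag_recurrence:
  fixes A B C D :: "real^2^2"
  assumes "det B = 1" and "det D = 1" and "trace D = trace B"
  defines "s \<equiv> (trace B)\<^sup>2 - 1"
  shows "trace (Mkl A B C D (k + 3) (k + 3)) =
    s * (trace (Mkl A B C D (k + 2) (k + 2)) - trace (Mkl A B C D (k + 1) (k + 1)))
    + trace (Mkl A B C D k k)"
proof -
  define T where "T = (\<lambda>Y::real^2^2. D ** Y ** B)"
  have "(T ^^ (k + 3)) C = T (T (T ((T ^^ k) C)))"
    by (simp add: numeral_3_eq_3)
  also have "\<dots> = s *\<^sub>R (T ^^ (k + 2)) C - s *\<^sub>R (T ^^ (k + 1)) C + (T ^^ k) C"
    using sandwich_cubic[OF assms(1-3)] by (simp add: T_def s_def numeral_2_eq_2)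
  finally show ?thesis
    by (simp add: Mkl_diag_funpow T_def[symmetric] matrix_add_rdistrib matrix_diff_rdistrib
        scalar_matrix_assoc[symmetric] trace_add trace_sub trace_scaleR right_diff_distrib)
qed

lemma recurrence3_unique:
  fixes f g :: "nat \<Rightarrow> 'a"
  assumes "\<And>k. f (k + 3) = F (f k) (f (k + 1)) (f (k + 2))"
    and "\<And>k. g (k + 3) = F (g k) (g (k + 1)) (g (k + 2))"
    and "f 0 = g 0" and "f 1 = g 1" and "f 2 = g 2"
  shows "f k = g k"
proof (induction k rule: less_induct)
  case (less k)
  show ?case
  proof (cases "k < 3")
    case True
    then have "k = 0 \<or> k = 1 \<or> k = 2" by linarith
    with assms(3-5) show ?thesis by blast
  next
    case False
    then obtain j where "k = j + 3" by (metis add.commute le_Suc_ex not_less)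
    with less assms(1,2)[of j] show ?thesis by simp
  qed
qed

theorem lemma2p4:
  fixes A B C D :: "real^2^2" and n :: nat
  assumes "A \<in> SL2" and "B \<in> SL2" and "C \<in> SL2" and "D \<in> SL2"
    and "trace B = trace D"
    and "trace (Mkl A B C D 0 0) = trace (matpow B n)"
    and "trace (Mkl A B C D 1 1) = trace (matpow B (n + 2))"
    and "trace (Mkl A B C D 2 2) = trace (matpow B (n + 4))"
  shows "\<forall>k::nat. k \<ge> 3 \<longrightarrow> trace (Mkl A B C D k k) = trace (matpow B (n + 2 * k))"
proof -
  have det: "det B = 1" "det D = 1" using assms(2,4) by (simp_all add: SL2_def)
  have powers: "matpow B (n + 2 * k) = Mkl (mat 1) B (matpow B n) B k k" for k
  proof -
    have "n + 2 * k = k + n + k" by simp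
    then show ?thesis by (simp only: Mkl_def matpow_add matrix_mul_rid)
  qed
  have "trace (Mkl A B C D k k) = trace (Mkl (mat 1) B (matpow B n) B k k)" for k
    by (rule recurrence3_unique[where F = "\<lambda>x y z. ((trace B)\<^sup>2 - 1) * (z - y) + x"])
      (use trace_Mkl_diag_recurrence[OF det assms(5)[symmetric]]
        trace_Mkl_diag_recurrence[OF det(1) det(1) refl] assms(6-8) powers[of 0] powers[of 1]
        powers[of 2] in simp_all)
  then show ?thesis by (simp add: powers)
qed

end
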